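(* Let $a,q$ be complex numbers, let $F(z)=\sum_{n=0}^{\infty}a_nz^n\in\mathbb{C}[[z]]$ and for $k\ge0$ let $F_k(z)=\sum_{i=0}^ka_iz^i$ be its $k$-th truncation. Suppose that $$\frac{F(z)}{1-az}=\sum_{n=0}^{\infty}\frac{c_nz^{n}}{1-azq^n}$$ in $\mathbb{C}[[z]]$ with coefficients $c_n$ independent of $z$. Then $c_0=a_0$ and for $n\ge1$, $$c_n=\sum_{k=0}^{n-1}g_{n-k}(q)\,q^{(n-k)k}\,[z^{n}]\Big\{\frac{F(z)-F_k(z)}{1-az}\Big\},$$ where the polynomials $g_n(q)$ ($n\ge1$) are defined recursively by $$g_n(q)=1-\sum_{i=1}^{n-1}g_{n-i}(q)\,q^{(n-i)i}.$$
   Context: $[z^m]\{f\}$ denotes the coefficient of $z^m$ in the formal power series $f$; $1/(1-az)$ and $1/(1-azq^n)$ are expanded as geometric series in $z$. Empty sums are $0$ (so $g_1(q)=1$). *)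

theory Defs
  imports Complex_Main "HOL-Computational_Algebra.Formal_Power_Series"
begin

definition fps_trunc :: "nat \<Rightarrow> 'a::zero fps \<Rightarrow> 'a fps" where
  "fps_trunc k F = Abs_fps (\<lambda>i. if i \<le> k then fps_nth F i else 0)"

function gpoly :: "nat \<Rightarrow> complex \<Rightarrow> complex" where
  "gpoly n q = 1 - (\<Sum>i\<in>{1..<n}. gpoly (n - i) q * q ^ ((n - i) * i))"
  by auto
termination
  by (relation "measure fst") auto

end

theory Submission
  imports Defs
begin

text \<open>
  Write e_m for the coefficient of z^m in F(z)/(1-az). Comparing coefficients of z^m in the
  hypothesis gives the triangular system e_m = sum_{j<=m} c_j a^(m-j) q^(j(m-j)), and the
  coefficient of z^n in (F - F_k)/(1-az) is e_n - a^(n-k) e_k. Substituting the system into the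
  claimed formula, c_j a^(n-j) gets the coefficient
  sum_{k<n} g_{n-k} q^((n-k)k) (q^(j(n-j)) - [j <= k] q^(j(k-j))).
  After the shift k = j + i the exponents combine as (n-k)k + j(k-j) = j(n-j) + (n-j-i)i, so the
  recursion sum_{i<N} g_{N-i} q^((N-i)i) = 1 (for N >= 1) collapses this coefficient to [j = n].
\<close>

unbundle fps_syntax

declare gpoly.simps [simp del]

lemma inverse_one_minus_const_X:
  "inverse (1 - fps_const (b :: 'a :: field) * fps_X) = Abs_fps (\<lambda>n. b ^ n)"
proof (rule fps_inverse_unique, rule fps_ext)
  fix n
  show "((1 - fps_const b * fps_X) * Abs_fps (\<lambda>n. b ^ n)) $ n = (1 :: 'a fps) $ n"
    by (cases n) (simp_all add: algebra_simps)
qed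

lemma fps_nth_mult_inverse_one_minus_const_X:
  "(G * inverse (1 - fps_const (b :: 'a :: field) * fps_X)) $ n = (\<Sum>i\<le>n. G $ i * b ^ (n - i))"
  by (simp add: inverse_one_minus_const_X fps_mult_nth atLeast0AtMost)

lemma fps_nth_X_power_mult_inverse_one_minus_const_X:
  "(fps_const (c :: 'a :: field) * fps_X ^ n * inverse (1 - fps_const b * fps_X)) $ m
     = (if m < n then 0 else c * b ^ (m - n))"
  by (simp add: mult.assoc fps_X_power_mult_nth inverse_one_minus_const_X)

lemma fps_nth_sums_lower_triangular:
  fixes f :: "nat \<Rightarrow> 'a :: ab_group_add fps"
  assumes "f sums S" and "\<And>n. m < n \<Longrightarrow> f n $ m = 0"
  shows "S $ m = (\<Sum>n\<le>m. f n $ m)"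
proof -
  from assms(1) have "eventually (\<lambda>N. (\<Sum>n<N. f n) $ m = S $ m) sequentially"
    unfolding sums_def tendsto_fps_iff by blast
  then obtain N0 where N0: "\<And>N. N \<ge> N0 \<Longrightarrow> (\<Sum>n<N. f n) $ m = S $ m"
    by (auto simp: eventually_sequentially)
  define N where "N = max N0 (Suc m)"
  have "(\<Sum>n<N. f n $ m) = (\<Sum>n\<le>m. f n $ m)"
    using assms(2) by (intro sum.mono_neutral_right) (auto simp: N_def)
  moreover have "(\<Sum>n<N. f n) $ m = S $ m"
    using N0 by (simp add: N_def)
  ultimately show ?thesis
    by (simp add: fps_sum_nth)
qed

lemma fps_nth_tail_mult_inverse_one_minus_const_X:
  fixes F :: "'a :: field fps" and b :: 'a
  defines "G \<equiv> F * inverse (1 - fps_const b * fps_X)"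
  assumes "k \<le> n"
  shows "((F - fps_trunc k F) * inverse (1 - fps_const b * fps_X)) $ n = G $ n - b ^ (n - k) * G $ k"
proof -
  have "((F - fps_trunc k F) * inverse (1 - fps_const b * fps_X)) $ n
          = G $ n - (\<Sum>i\<le>n. if i \<le> k then F $ i * b ^ (n - i) else 0)"
    unfolding G_def fps_nth_mult_inverse_one_minus_const_X sum_subtractf[symmetric]
    by (rule sum.cong) (auto simp: fps_trunc_def algebra_simps)
  also have "(\<Sum>i\<le>n. if i \<le> k then F $ i * b ^ (n - i) else 0) = (\<Sum>i\<le>k. F $ i * b ^ (n - i))"
    using \<open>k \<le> n\<close> by (subst sum.inter_filter[symmetric]) (auto intro!: sum.cong)
  also have "\<dots> = b ^ (n - k) * G $ k"
    unfolding G_def fps_nth_mult_inverse_one_minus_const_X sum_distrib_left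
    using \<open>k \<le> n\<close> by (intro sum.cong) (auto simp: power_add[symmetric])
  finally show ?thesis .
qed

lemma sum_gpoly_eq_1:
  assumes "N \<ge> 1"
  shows "(\<Sum>i<N. gpoly (N - i) q * q ^ ((N - i) * i)) = 1"
proof -
  have "{..<N} = insert 0 {1..<N}"
    using assms by auto
  then show ?thesis
    by (simp add: gpoly.simps[of N])
qed

lemma sum_gpoly_shifted:
  assumes "j \<le> n"
  shows "(\<Sum>k\<in>{j..<n}. gpoly (n - k) q * q ^ ((n - k) * k) * q ^ (j * (k - j)))
           = (if j = n then 0 else q ^ (j * (n - j)))"
proof -
  have exponent: "(n - (j + i)) * (j + i) + j * i = j * (n - j) + (n - j - i) * i"
    if "i < n - j" for i
  proof -
    define r where "r = n - j - i"
    have "n = j + i + r"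
      using that by (simp add: r_def)
    then show ?thesis
      by (simp add: algebra_simps)
  qed
  have "(\<Sum>k\<in>{j..<n}. gpoly (n - k) q * q ^ ((n - k) * k) * q ^ (j * (k - j)))
          = (\<Sum>i<n - j. gpoly (n - (j + i)) q * q ^ ((n - (j + i)) * (j + i)) * q ^ (j * i))"
    by (subst sum.atLeastLessThan_shift_0) (simp add: atLeast0LessThan)
  also have "\<dots> = q ^ (j * (n - j)) * (\<Sum>i<n - j. gpoly (n - j - i) q * q ^ ((n - j - i) * i))"
    unfolding sum_distrib_left
  proof (rule sum.cong)
    fix i assume "i \<in> {..<n - j}"
    then have "q ^ ((n - (j + i)) * (j + i)) * q ^ (j * i) = q ^ (j * (n - j)) * q ^ ((n - j - i) * i)"
      using exponent by (simp add: power_add[symmetric])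
    then show "gpoly (n - (j + i)) q * q ^ ((n - (j + i)) * (j + i)) * q ^ (j * i)
        = q ^ (j * (n - j)) * (gpoly (n - j - i) q * q ^ ((n - j - i) * i))"
      by (simp add: diff_diff_add mult_ac)
  qed simp
  also have "\<dots> = (if j = n then 0 else q ^ (j * (n - j)))"
    using assms sum_gpoly_eq_1[of "n - j" q] by (cases "j = n") simp_all
  finally show ?thesis .
qed

lemma sum_gpoly_kernel:
  assumes "j \<le> n" and "1 \<le> n"
  shows "(\<Sum>k<n. gpoly (n - k) q * q ^ ((n - k) * k) *
            (q ^ (j * (n - j)) - (if j \<le> k then q ^ (j * (k - j)) else 0)))
           = (if j = n then 1 else 0)"
proof -
  have tail: "(\<Sum>k<n. if j \<le> k then gpoly (n - k) q * q ^ ((n - k) * k) * q ^ (j * (k - j)) else 0)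
           = (\<Sum>k\<in>{j..<n}. gpoly (n - k) q * q ^ ((n - k) * k) * q ^ (j * (k - j)))"
    by (subst sum.inter_filter[symmetric]) (auto intro!: sum.cong)
  have "(\<Sum>k<n. gpoly (n - k) q * q ^ ((n - k) * k) *
            (q ^ (j * (n - j)) - (if j \<le> k then q ^ (j * (k - j)) else 0)))
        = (\<Sum>k<n. gpoly (n - k) q * q ^ ((n - k) * k)) * q ^ (j * (n - j))
          - (\<Sum>k<n. if j \<le> k then gpoly (n - k) q * q ^ ((n - k) * k) * q ^ (j * (k - j)) else 0)"
    unfolding sum_distrib_right sum_subtractf[symmetric] by (intro sum.cong) (auto simp: algebra_simps)
  also have "\<dots> = 1 * q ^ (j * (n - j)) - (if j = n then 0 else q ^ (j * (n - j)))"
    unfolding tail sum_gpoly_eq_1[OF \<open>1 \<le> n\<close>] sum_gpoly_shifted[OF \<open>j \<le> n\<close>] ..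
  also have "\<dots> = (if j = n then 1 else 0)"
    by simp
  finally show ?thesis .
qed

lemma triangular_system_difference:
  fixes a q :: "'a :: comm_ring_1" and c e :: "nat \<Rightarrow> 'a"
  assumes e: "\<And>m. e m = (\<Sum>j\<le>m. c j * a ^ (m - j) * q ^ (j * (m - j)))" and "k \<le> n"
  shows "e n - a ^ (n - k) * e k
           = (\<Sum>j\<le>n. c j * a ^ (n - j) * (q ^ (j * (n - j)) - (if j \<le> k then q ^ (j * (k - j)) else 0)))"
proof -
  have "a ^ (n - k) * e k = (\<Sum>j\<le>k. c j * a ^ (n - j) * q ^ (j * (k - j)))"
    unfolding e[of k] sum_distrib_left
  proof (intro sum.cong)
    fix j assume "j \<in> {..k}"
    then have "n - j = (n - k) + (k - j)"
      using \<open>k \<le> n\<close> by simp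
    then show "a ^ (n - k) * (c j * a ^ (k - j) * q ^ (j * (k - j))) = c j * a ^ (n - j) * q ^ (j * (k - j))"
      by (simp add: power_add mult_ac)
  qed simp
  also have "\<dots> = (\<Sum>j\<le>n. if j \<le> k then c j * a ^ (n - j) * q ^ (j * (k - j)) else 0)"
    using \<open>k \<le> n\<close> by (subst sum.inter_filter[symmetric]) (auto intro!: sum.cong)
  finally have shifted: "a ^ (n - k) * e k = \<dots>" .
  show ?thesis
    unfolding shifted e[of n] sum_subtractf[symmetric] by (intro sum.cong) (auto simp: algebra_simps)
qed

lemma triangular_system_inversion:
  fixes a q :: complex and c e :: "nat \<Rightarrow> complex"
  assumes e: "\<And>m. e m = (\<Sum>j\<le>m. c j * a ^ (m - j) * q ^ (j * (m - j)))" and "1 \<le> n"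
  shows "c n = (\<Sum>k<n. gpoly (n - k) q * q ^ ((n - k) * k) * (e n - a ^ (n - k) * e k))"
proof -
  define w where "w k = gpoly (n - k) q * q ^ ((n - k) * k)" for k
  define K where "K k j = q ^ (j * (n - j)) - (if j \<le> k then q ^ (j * (k - j)) else 0)" for k j
  have "(\<Sum>k<n. w k * (e n - a ^ (n - k) * e k)) = (\<Sum>k<n. w k * (\<Sum>j\<le>n. c j * a ^ (n - j) * K k j))"
    unfolding K_def by (intro sum.cong) (simp_all add: triangular_system_difference[OF e])
  also have "\<dots> = (\<Sum>j\<le>n. c j * a ^ (n - j) * (\<Sum>k<n. w k * K k j))"
    unfolding sum_distrib_left by (subst sum.swap) (simp add: mult_ac)
  also have "\<dots> = (\<Sum>j\<le>n. if j = n then c j else 0)"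
    unfolding w_def K_def using \<open>1 \<le> n\<close> by (intro sum.cong) (auto simp: sum_gpoly_kernel)
  finally show ?thesis
    unfolding w_def by simp
qed

theorem corollary2p4:
  fixes a q :: complex and F :: "complex fps" and c :: "nat \<Rightarrow> complex"
  assumes "(\<lambda>n. fps_const (c n) * fps_X ^ n * inverse (1 - fps_const (a * q ^ n) * fps_X))
             sums (F * inverse (1 - fps_const a * fps_X))"
  shows "c 0 = fps_nth F 0 \<and>
    (\<forall>n\<ge>1. c n = (\<Sum>k<n. gpoly (n - k) q * q ^ ((n - k) * k) *
       fps_nth ((F - fps_trunc k F) * inverse (1 - fps_const a * fps_X)) n))"
proof -
  define e where "e m = (F * inverse (1 - fps_const a * fps_X)) $ m" for m
  have e_system: "e m = (\<Sum>j\<le>m. c j * a ^ (m - j) * q ^ (j * (m - j)))" for m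
  proof -
    have "e m = (\<Sum>j\<le>m. (fps_const (c j) * fps_X ^ j * inverse (1 - fps_const (a * q ^ j) * fps_X)) $ m)"
      unfolding e_def using assms
      by (rule fps_nth_sums_lower_triangular) (simp add: fps_nth_X_power_mult_inverse_one_minus_const_X)
    then show ?thesis
      by (simp add: fps_nth_X_power_mult_inverse_one_minus_const_X power_mult_distrib power_mult) (simp add: mult.assoc)
  qed
  have "c 0 = F $ 0"
    using e_system[of 0] by (simp add: e_def fps_nth_mult_inverse_one_minus_const_X)
  moreover have "c n = (\<Sum>k<n. gpoly (n - k) q * q ^ ((n - k) * k) *
       ((F - fps_trunc k F) * inverse (1 - fps_const a * fps_X)) $ n)" if "n \<ge> 1" for n
  proof -
    have "(\<Sum>k<n. gpoly (n - k) q * q ^ ((n - k) * k) *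
            ((F - fps_trunc k F) * inverse (1 - fps_const a * fps_X)) $ n)
          = (\<Sum>k<n. gpoly (n - k) q * q ^ ((n - k) * k) * (e n - a ^ (n - k) * e k))"
      unfolding e_def by (intro sum.cong) (simp_all add: fps_nth_tail_mult_inverse_one_minus_const_X)
    with triangular_system_inversion[OF e_system that] show ?thesis
      by (rule trans_sym)
  qed
  ultimately show ?thesis by blast
qed

end
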